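(* Let $\Gamma$ be a lattice satisfying the standing assumptions below, and let $M$ be an $X$-type operator of the 3D toric code on $\Gamma$ that is a stabilizer or a logical operator, and whose support $\mathrm{supp}(M)$ (set of faces on which it acts nontrivially) is not a cut set of $\Gamma$. Then each face in $\mathrm{supp}(M)$ lies in the boundary of exactly one volume; that is, $\mathrm{supp}(M)\subseteq\mathcal{F}=\{f\in C_2(\Gamma):|\iota(f)|=1\}$.
   Context: $\Gamma$ is a finite, connected three-dimensional cell complex with edges $C_1(\Gamma)$ (partial edges allowed at the boundary), faces $C_2(\Gamma)$, volumes $C_3(\Gamma)$; $\partial(f)$ denotes the boundary edges of a face, $\partial(\nu)$ the boundary faces of a volume, $\iota(e)$ the set of faces containing edge $e$, $\iota(f)$ the set of volumes having $f$ in their boundary; for a set $A$ of edges, $\iota(A)$ is the symmetric difference of the $\iota(e)$, $e\in A$. Every face lies in the boundary of at most two volumes. Standing assumptions: (L1) $\Gamma$ has no boundaries in its interior, so that every face cycle (a sequence of faces, each lying in exactly two volumes, such that for every volume $\nu$ the faces of $\partial(\nu)$ occur an even number of times in it) equals, as a set mod 2, $\iota(A)$ for some $A\subseteq C_1(\Gamma)$; (L2) the boundary of every face of $\Gamma$ and of its dual $\Gamma^*$ is a closed path or an open path beginning and ending with partial edges; the dual complex is connected. The 3D toric code on $\Gamma$ has one qubit per face and stabilizer group generated by $B_e=\prod_{f\in\iota(e)}Z_f$ and $A_\nu=\prod_{f\in\partial(\nu)}X_f$; a logical operator is a Pauli operator commuting with all stabilizers but not in the stabilizer group (up to phase). A face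 path is a sequence of faces $\rho=(f_1,\dots,f_m)$ with pairwise distinct volumes $\Lambda(\rho)=(\nu_1,\dots,\nu_{m-1})$ such that $f_i,f_{i+1}\in\partial(\nu_i)$. A set of faces $K$ is a cut set of $\Gamma$ if there exist volumes $\nu,\nu'$ such that every face path $\rho=(f_1,\dots,f_m)$ with $f_1\in\partial(\nu)$, $f_m\in\partial(\nu')$ and $\nu,\nu'\notin\Lambda(\rho)$ satisfies $K\cap\rho\neq\emptyset$. *)

theory Defs
  imports Main
begin

text \<open>
  Cell complex data (types: 'a vertices, 'e edges, 'f faces, 'v volumes):
  V, E, F, C are the vertex/edge/face/volume sets;
  ends e = endpoints of edge e (one endpoint = partial edge);
  bdF f = boundary edges of face f;  bdV v = boundary faces of volume v.
\<close>

definition iotaE :: "'f set \<Rightarrow> ('f \<Rightarrow> 'e set) \<Rightarrow> 'e \<Rightarrow> 'f set" where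
  "iotaE F bdF e = {f \<in> F. e \<in> bdF f}"

definition iotaF :: "'v set \<Rightarrow> ('v \<Rightarrow> 'f set) \<Rightarrow> 'f \<Rightarrow> 'v set" where
  "iotaF C bdV f = {v \<in> C. f \<in> bdV v}"

text \<open>iota(A): symmetric difference of the iota(e), e in A.\<close>
definition iota_set :: "'f set \<Rightarrow> ('f \<Rightarrow> 'e set) \<Rightarrow> 'e set \<Rightarrow> 'f set" where
  "iota_set F bdF A = {f \<in> F. odd (card {e \<in> A. e \<in> bdF f})}"

definition closed_path :: "('e \<Rightarrow> 'a set) \<Rightarrow> 'e set \<Rightarrow> bool" where
  "closed_path ends S \<longleftrightarrow> (\<exists>es vs. length es \<ge> 1 \<and> length vs = length es \<and>
     distinct es \<and> distinct vs \<and> set es = S \<and>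
     (\<forall>i < length es. ends (es ! i) = {vs ! i, vs ! ((i + 1) mod length es)} \<and>
                       card (ends (es ! i)) = 2))"

definition open_partial_path :: "('e \<Rightarrow> 'a set) \<Rightarrow> 'e set \<Rightarrow> bool" where
  "open_partial_path ends S \<longleftrightarrow> (\<exists>es vs. length es \<ge> 2 \<and> length vs + 1 = length es \<and>
     distinct es \<and> distinct vs \<and> set es = S \<and>
     ends (es ! 0) = {vs ! 0} \<and>
     ends (es ! (length es - 1)) = {vs ! (length es - 2)} \<and>
     (\<forall>i. 0 < i \<and> i < length es - 1 \<longrightarrow> ends (es ! i) = {vs ! (i - 1), vs ! i}))"

definition face_cycle :: "'f set \<Rightarrow> 'v set \<Rightarrow> ('v \<Rightarrow> 'f set) \<Rightarrow> 'f list \<Rightarrow> bool" where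
  "face_cycle F C bdV fs \<longleftrightarrow> set fs \<subseteq> F \<and> (\<forall>f \<in> set fs. card (iotaF C bdV f) = 2) \<and>
     (\<forall>v \<in> C. even (length (filter (\<lambda>f. f \<in> bdV v) fs)))"

definition good_lattice ::
  "'a set \<Rightarrow> 'e set \<Rightarrow> 'f set \<Rightarrow> 'v set \<Rightarrow> ('e \<Rightarrow> 'a set) \<Rightarrow> ('f \<Rightarrow> 'e set) \<Rightarrow> ('v \<Rightarrow> 'f set) \<Rightarrow> bool"
  where
  "good_lattice V E F C ends bdF bdV \<longleftrightarrow>
     finite V \<and> finite E \<and> finite F \<and> finite C \<and>
     (\<forall>e \<in> E. ends e \<subseteq> V \<and> 1 \<le> card (ends e) \<and> card (ends e) \<le> 2) \<and>
     (\<forall>f \<in> F. bdF f \<subseteq> E) \<and> (\<forall>v \<in> C. bdV v \<subseteq> F) \<and>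
     (\<forall>f \<in> F. card (iotaF C bdV f) \<le> 2) \<and>
     \<comment> \<open>Gamma connected (1-skeleton)\<close>
     (\<forall>u \<in> V. \<forall>w \<in> V. (u, w) \<in> {(x, y). \<exists>e \<in> E. ends e = {x, y}}\<^sup>*) \<and>
     \<comment> \<open>dual complex connected\<close>
     (\<forall>u \<in> C. \<forall>w \<in> C. (u, w) \<in> {(x, y). \<exists>f \<in> F. iotaF C bdV f = {x, y}}\<^sup>*) \<and>
     \<comment> \<open>(L1)\<close>
     (\<forall>fs. face_cycle F C bdV fs \<longrightarrow>
        (\<exists>A \<subseteq> E. {f \<in> F. odd (length (filter (\<lambda>g. g = f) fs))} = iota_set F bdF A)) \<and>
     \<comment> \<open>(L2) for Gamma\<close>
     (\<forall>f \<in> F. closed_path ends (bdF f) \<or> open_partial_path ends (bdF f)) \<and>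
     \<comment> \<open>(L2) for the dual: dual face of e is iota(e), dual edge f has ends iota(f)\<close>
     (\<forall>e \<in> E. closed_path (iotaF C bdV) (iotaE F bdF e) \<or>
              open_partial_path (iotaF C bdV) (iotaE F bdF e))"

text \<open>Pauli operators up to phase: (X-support, Z-support).\<close>
type_synonym 'f pauli = "'f set \<times> 'f set"

definition pmult :: "'f pauli \<Rightarrow> 'f pauli \<Rightarrow> 'f pauli" where
  "pmult p q = ((fst p - fst q) \<union> (fst q - fst p), (snd p - snd q) \<union> (snd q - snd p))"

definition commutes :: "'f pauli \<Rightarrow> 'f pauli \<Rightarrow> bool" where
  "commutes p q \<longleftrightarrow> even (card (fst p \<inter> snd q) + card (snd p \<inter> fst q))"

inductive_set stab_group :: "'e set \<Rightarrow> 'f set \<Rightarrow> 'v set \<Rightarrow> ('f \<Rightarrow> 'e set) \<Rightarrow> ('v \<Rightarrow> 'f set) \<Rightarrow> 'f pauli set"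
  for E F C bdF bdV where
  unit: "({}, {}) \<in> stab_group E F C bdF bdV"
| B: "e \<in> E \<Longrightarrow> ({}, iotaE F bdF e) \<in> stab_group E F C bdF bdV"
| A: "v \<in> C \<Longrightarrow> (bdV v, {}) \<in> stab_group E F C bdF bdV"
| mult: "p \<in> stab_group E F C bdF bdV \<Longrightarrow> q \<in> stab_group E F C bdF bdV \<Longrightarrow>
         pmult p q \<in> stab_group E F C bdF bdV"

definition logical_op :: "'e set \<Rightarrow> 'f set \<Rightarrow> 'v set \<Rightarrow> ('f \<Rightarrow> 'e set) \<Rightarrow> ('v \<Rightarrow> 'f set) \<Rightarrow> 'f pauli \<Rightarrow> bool" where
  "logical_op E F C bdF bdV p \<longleftrightarrow> fst p \<subseteq> F \<and> snd p \<subseteq> F \<and>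
     (\<forall>s \<in> stab_group E F C bdF bdV. commutes p s) \<and> p \<notin> stab_group E F C bdF bdV"

definition face_path :: "'f set \<Rightarrow> 'v set \<Rightarrow> ('v \<Rightarrow> 'f set) \<Rightarrow> 'f list \<Rightarrow> 'v list \<Rightarrow> bool" where
  "face_path F C bdV fs vs \<longleftrightarrow> length fs = length vs + 1 \<and> set fs \<subseteq> F \<and> set vs \<subseteq> C \<and>
     distinct vs \<and> (\<forall>i < length vs. fs ! i \<in> bdV (vs ! i) \<and> fs ! (i + 1) \<in> bdV (vs ! i))"

definition cut_set :: "'f set \<Rightarrow> 'v set \<Rightarrow> ('v \<Rightarrow> 'f set) \<Rightarrow> 'f set \<Rightarrow> bool" where
  "cut_set F C bdV K \<longleftrightarrow> (\<exists>v \<in> C. \<exists>v' \<in> C. \<forall>fs vs.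
     face_path F C bdV fs vs \<and> hd fs \<in> bdV v \<and> last fs \<in> bdV v' \<and>
     v \<notin> set vs \<and> v' \<notin> set vs \<longrightarrow> set fs \<inter> K \<noteq> {})"

end

theory Submission
  imports Defs
begin

text \<open>
  By (L2), \<open>f\<close> has a boundary edge \<open>e\<close> and is an edge of the dual
  face \<open>\<iota>(e)\<close>, so \<open>f\<close> lies in at least one volume. Suppose \<open>\<iota>(f) = {\<nu>\<^sub>1, \<nu>\<^sub>2}\<close>.
  As \<open>supp(M)\<close> is not a cut set, some face path from \<open>\<nu>\<^sub>1\<close> to \<open>\<nu>\<^sub>2\<close> avoids it; closed
  up by \<open>f\<close>, it becomes a closed walk in the dual graph meeting \<open>supp(M)\<close> exactly once.
  If \<open>M\<close> is a stabilizer, its support consists of the faces separating a set \<open>T\<close> of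
  volumes from its complement, and a closed walk crosses that boundary an even number
  of times. If \<open>M\<close> is logical, the closed walk is a face cycle, hence by (L1) equals
  \<open>\<iota>(A)\<close> mod 2; commuting with every \<open>B\<^sub>e\<close> makes \<open>|supp(M) \<inter> \<iota>(A)|\<close> even, yet this
  intersection is \<open>{f}\<close>.
\<close>

lemma closed_path_ends_nonempty: "closed_path ends S \<Longrightarrow> e \<in> S \<Longrightarrow> ends e \<noteq> {}"
  unfolding closed_path_def by (auto simp: in_set_conv_nth)

lemma open_partial_path_ends_nonempty:
  assumes "open_partial_path ends S" "e \<in> S"
  shows "ends e \<noteq> {}"
proof -
  obtain es vs where path: "length es \<ge> 2" "length vs + 1 = length es" "set es = S"
     "ends (es ! 0) = {vs ! 0}" "ends (es ! (length es - 1)) = {vs ! (length es - 2)}"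
     "\<forall>i. 0 < i \<and> i < length es - 1 \<longrightarrow> ends (es ! i) = {vs ! (i - 1), vs ! i}"
    using assms(1) unfolding open_partial_path_def by blast
  obtain i where "i < length es" "es ! i = e"
    using path(3) assms(2) by (auto simp: in_set_conv_nth)
  then show ?thesis
    using path by (cases "i = 0 \<or> i = length es - 1") auto
qed

lemma closed_path_nonempty: "closed_path ends S \<Longrightarrow> S \<noteq> {}"
  unfolding closed_path_def by auto

lemma open_partial_path_nonempty: "open_partial_path ends S \<Longrightarrow> S \<noteq> {}"
  unfolding open_partial_path_def by auto

lemma iotaF_nonempty:
  assumes lattice: "good_lattice V E F C ends bdF bdV" and "f \<in> F"
  shows "iotaF C bdV f \<noteq> {}"
proof -
  have "closed_path ends (bdF f) \<or> open_partial_path ends (bdF f)"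
    using assms unfolding good_lattice_def by blast
  then obtain e where "e \<in> bdF f"
    using closed_path_nonempty open_partial_path_nonempty by blast
  then have "e \<in> E" "f \<in> iotaE F bdF e"
    using assms unfolding good_lattice_def iotaE_def by auto
  moreover from \<open>e \<in> E\<close> have
    "closed_path (iotaF C bdV) (iotaE F bdF e) \<or> open_partial_path (iotaF C bdV) (iotaE F bdF e)"
    using lattice unfolding good_lattice_def by blast
  ultimately show ?thesis
    by (metis closed_path_ends_nonempty open_partial_path_ends_nonempty)
qed

lemma iotaF_eq_doubleton:
  assumes "finite C" "card (iotaF C bdV g) \<le> 2" "a \<in> C" "b \<in> C" "g \<in> bdV a" "g \<in> bdV b" "a \<noteq> b"
  shows "iotaF C bdV g = {a, b}"
proof -
  have "{a, b} \<subseteq> iotaF C bdV g" "finite (iotaF C bdV g)"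
    using assms unfolding iotaF_def by auto
  moreover have "card {a, b} = 2" using assms(7) by simp
  ultimately show ?thesis using assms(2) by (metis card_seteq)
qed

definition dual_walk :: "('f \<Rightarrow> 'v set) \<Rightarrow> 'f list \<Rightarrow> 'v list \<Rightarrow> bool" where
  "dual_walk P fs ws \<longleftrightarrow> length ws = Suc (length fs) \<and>
     (\<forall>i < length fs. P (fs ! i) = {ws ! i, ws ! Suc i} \<and> ws ! i \<noteq> ws ! Suc i)"

lemma dual_walk_Nil: "dual_walk P [] ws \<longleftrightarrow> (\<exists>w. ws = [w])"
  unfolding dual_walk_def by (auto simp: length_Suc_conv)

lemma dual_walk_Cons:
  "dual_walk P (g # fs) ws \<longleftrightarrow>
     (\<exists>w ws'. ws = w # ws' \<and> ws' \<noteq> [] \<and> P g = {w, hd ws'} \<and> w \<noteq> hd ws' \<and> dual_walk P fs ws')"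
  unfolding dual_walk_def
  by (cases ws) (auto simp: All_less_Suc2 length_Suc_conv)

lemma dual_walk_count_list:
  assumes "dual_walk P fs ws"
  shows "length (filter (\<lambda>g. v \<in> P g) fs) + of_bool (v = hd ws) + of_bool (v = last ws)
           = 2 * count_list ws v"
  using assms
proof (induction fs arbitrary: ws)
  case Nil
  then show ?case by (auto simp: dual_walk_Nil)
next
  case (Cons g fs)
  then obtain w ws' where "ws = w # ws'" "ws' \<noteq> []" "P g = {w, hd ws'}" "w \<noteq> hd ws'"
    "dual_walk P fs ws'"
    by (auto simp: dual_walk_Cons)
  moreover from this have "last ws = last ws'" by simp
  ultimately show ?case using Cons.IH[of ws'] by auto
qed

lemma dual_walk_invariant:
  assumes "dual_walk P fs ws"
    and "\<And>g a b. g \<in> set fs \<Longrightarrow> P g = {a, b} \<Longrightarrow> Q a \<longleftrightarrow> Q b"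
  shows "Q (hd ws) \<longleftrightarrow> Q (last ws)"
  using assms
proof (induction fs arbitrary: ws)
  case Nil
  then show ?case by (auto simp: dual_walk_Nil)
next
  case (Cons g fs)
  then obtain w ws' where "ws = w # ws'" "ws' \<noteq> []" "P g = {w, hd ws'}" "dual_walk P fs ws'"
    by (auto simp: dual_walk_Cons)
  with Cons.IH Cons.prems(2) show ?case by force
qed

lemma face_path_dual_walk:
  assumes path: "face_path F C bdV fs vs" "hd fs \<in> bdV \<nu>\<^sub>1" "last fs \<in> bdV \<nu>\<^sub>2"
    and "\<nu>\<^sub>1 \<notin> set vs" "\<nu>\<^sub>2 \<notin> set vs" "\<nu>\<^sub>1 \<noteq> \<nu>\<^sub>2" "\<nu>\<^sub>1 \<in> C" "\<nu>\<^sub>2 \<in> C"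
    and "finite C" "\<forall>g \<in> F. card (iotaF C bdV g) \<le> 2"
  shows "dual_walk (iotaF C bdV) fs (\<nu>\<^sub>1 # vs @ [\<nu>\<^sub>2])"
proof -
  let ?ws = "\<nu>\<^sub>1 # vs @ [\<nu>\<^sub>2]"
  have len: "length fs = Suc (length vs)" and "fs \<noteq> []" and "set fs \<subseteq> F" "set ?ws \<subseteq> C"
    and steps: "\<forall>i < length vs. fs ! i \<in> bdV (vs ! i) \<and> fs ! Suc i \<in> bdV (vs ! i)"
    using path assms(7,8) unfolding face_path_def by auto
  have "distinct ?ws"
    using path(1) assms(4-6) unfolding face_path_def by auto
  have "iotaF C bdV (fs ! i) = {?ws ! i, ?ws ! Suc i} \<and> ?ws ! i \<noteq> ?ws ! Suc i"
    if "i < length fs" for i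
  proof -
    have "fs ! i \<in> bdV (?ws ! i)"
      using that len steps path(2) \<open>fs \<noteq> []\<close> by (cases i) (auto simp: hd_conv_nth nth_append)
    moreover have "fs ! i \<in> bdV (?ws ! Suc i)"
      using that len steps path(3) \<open>fs \<noteq> []\<close>
      by (cases "i < length vs") (auto simp: last_conv_nth nth_append less_Suc_eq)
    moreover have "i < length ?ws" "Suc i < length ?ws"
      using that len by simp_all
    then have "?ws ! i \<noteq> ?ws ! Suc i"
      using nth_eq_iff_index_eq[OF \<open>distinct ?ws\<close>, of i "Suc i"] by simp
    moreover from \<open>i < length ?ws\<close> \<open>Suc i < length ?ws\<close> have "?ws ! i \<in> C" "?ws ! Suc i \<in> C"
      using \<open>set ?ws \<subseteq> C\<close> by (meson nth_mem subsetD)+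
    moreover have "card (iotaF C bdV (fs ! i)) \<le> 2"
      using that \<open>set fs \<subseteq> F\<close> assms(10) by (meson nth_mem subsetD)
    ultimately show ?thesis
      using iotaF_eq_doubleton[OF assms(9), of bdV "fs ! i" "?ws ! i" "?ws ! Suc i"] by simp
  qed
  then show ?thesis
    unfolding dual_walk_def using len by simp
qed

lemma closed_dual_walk_face_cycle:
  assumes "dual_walk (iotaF C bdV) fs ws" "hd ws = last ws" "set fs \<subseteq> F"
  shows "face_cycle F C bdV fs"
  unfolding face_cycle_def
proof (intro conjI ballI)
  fix g assume "g \<in> set fs"
  then show "card (iotaF C bdV g) = 2"
    using assms(1) unfolding dual_walk_def by (auto simp: in_set_conv_nth)
next
  fix v assume "v \<in> C"
  then have "filter (\<lambda>g. g \<in> bdV v) fs = filter (\<lambda>g. v \<in> iotaF C bdV g) fs"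
    unfolding iotaF_def by (intro filter_cong) auto
  moreover have "length (filter (\<lambda>g. v \<in> iotaF C bdV g) fs) + 2 * of_bool (v = last ws)
      = 2 * count_list ws v"
    using dual_walk_count_list[OF assms(1), of v] assms(2) by (simp add: mult_2 add.assoc)
  then have "even (length (filter (\<lambda>g. v \<in> iotaF C bdV g) fs) + 2 * of_bool (v = last ws))"
    by (metis dvd_triv_left)
  ultimately show "even (length (filter (\<lambda>g. g \<in> bdV v) fs))"
    by simp
qed (use assms(3) in simp)

lemma two_volume_face_closed_dual_walk:
  assumes lattice: "good_lattice V E F C ends bdF bdV"
    and "\<not> cut_set F C bdV S" "f \<in> F" "card (iotaF C bdV f) = 2"
  obtains fs ws where "dual_walk (iotaF C bdV) (f # fs) ws" "hd ws = last ws"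
    "set fs \<inter> S = {}" "set fs \<subseteq> F"
proof -
  obtain \<nu>\<^sub>1 \<nu>\<^sub>2 where \<nu>: "iotaF C bdV f = {\<nu>\<^sub>1, \<nu>\<^sub>2}" "\<nu>\<^sub>1 \<noteq> \<nu>\<^sub>2"
    using assms(4) by (meson card_2_iff)
  then have "\<nu>\<^sub>1 \<in> C" "\<nu>\<^sub>2 \<in> C" unfolding iotaF_def by auto
  then obtain fs vs where path: "face_path F C bdV fs vs" "hd fs \<in> bdV \<nu>\<^sub>1" "last fs \<in> bdV \<nu>\<^sub>2"
      "\<nu>\<^sub>1 \<notin> set vs" "\<nu>\<^sub>2 \<notin> set vs" "set fs \<inter> S = {}"
    using assms(2) unfolding cut_set_def by blast
  have "dual_walk (iotaF C bdV) fs (\<nu>\<^sub>1 # vs @ [\<nu>\<^sub>2])"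
    using face_path_dual_walk[OF path(1-5) \<nu>(2) \<open>\<nu>\<^sub>1 \<in> C\<close> \<open>\<nu>\<^sub>2 \<in> C\<close>] lattice
    unfolding good_lattice_def by blast
  then have "dual_walk (iotaF C bdV) (f # fs) (\<nu>\<^sub>2 # \<nu>\<^sub>1 # vs @ [\<nu>\<^sub>2])"
    using \<nu> by (auto simp: dual_walk_Cons insert_commute)
  moreover have "set fs \<subseteq> F"
    using path(1) unfolding face_path_def by blast
  ultimately show thesis
    using that path(6) by simp
qed

lemma odd_card_sym_diff_iff:
  assumes "finite X" "finite Y"
  shows "odd (card (sym_diff X Y)) \<longleftrightarrow> odd (card X) \<noteq> odd (card Y)"
proof -
  have "card (sym_diff X Y) = card (X - Y) + card (Y - X)"
    using assms by (intro card_Un_disjoint) auto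
  moreover have "card X = card (X - Y) + card (X \<inter> Y)"
    using card_Diff_subset_Int[of X Y] card_mono[of X "X \<inter> Y"] assms by simp
  moreover have "card Y = card (Y - X) + card (X \<inter> Y)"
    using card_Diff_subset_Int[of Y X] card_mono[of Y "Y \<inter> X"] assms by (simp add: Int_commute)
  ultimately show ?thesis by auto
qed

lemma stab_group_X_support:
  assumes "p \<in> stab_group E F C bdF bdV"
  shows "\<exists>T. finite T \<and> T \<subseteq> C \<and> fst p = {g. odd (card {\<nu> \<in> T. g \<in> bdV \<nu>})}"
  using assms
proof (induction rule: stab_group.induct)
  case unit
  show ?case by (intro exI[of _ "{}"]) simp
next
  case (B e)
  show ?case by (intro exI[of _ "{}"]) simp
next
  case (A \<nu>)
  have "{w \<in> {\<nu>}. g \<in> bdV w} = (if g \<in> bdV \<nu> then {\<nu>} else {})" for g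
    by auto
  with A show ?case by (intro exI[of _ "{\<nu>}"]) auto
next
  case (mult p q)
  then obtain T\<^sub>p T\<^sub>q where T: "finite T\<^sub>p" "T\<^sub>p \<subseteq> C" "fst p = {g. odd (card {\<nu> \<in> T\<^sub>p. g \<in> bdV \<nu>})}"
    "finite T\<^sub>q" "T\<^sub>q \<subseteq> C" "fst q = {g. odd (card {\<nu> \<in> T\<^sub>q. g \<in> bdV \<nu>})}"
    by blast
  have "odd (card {\<nu> \<in> sym_diff T\<^sub>p T\<^sub>q. g \<in> bdV \<nu>}) \<longleftrightarrow>
      odd (card {\<nu> \<in> T\<^sub>p. g \<in> bdV \<nu>}) \<noteq> odd (card {\<nu> \<in> T\<^sub>q. g \<in> bdV \<nu>})" for g
  proof -
    have "{\<nu> \<in> sym_diff T\<^sub>p T\<^sub>q. g \<in> bdV \<nu>} =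
        sym_diff {\<nu> \<in> T\<^sub>p. g \<in> bdV \<nu>} {\<nu> \<in> T\<^sub>q. g \<in> bdV \<nu>}"
      by blast
    then show ?thesis
      by (simp only:) (rule odd_card_sym_diff_iff; simp add: T(1,4))
  qed
  then have "fst (pmult p q) = {g. odd (card {\<nu> \<in> sym_diff T\<^sub>p T\<^sub>q. g \<in> bdV \<nu>})}"
    using T(3,6) unfolding pmult_def by auto
  moreover have "finite (sym_diff T\<^sub>p T\<^sub>q)" "sym_diff T\<^sub>p T\<^sub>q \<subseteq> C"
    using T by auto
  ultimately show ?case by blast
qed

lemma X_stabilizer_support_not_crossed_once:
  assumes "(S, {}) \<in> stab_group E F C bdF bdV"
    and walk: "dual_walk (iotaF C bdV) (f # fs) ws" "hd ws = last ws" "set fs \<inter> S = {}"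
  shows "f \<notin> S"
proof -
  obtain T where T: "T \<subseteq> C" "S = {g. odd (card {\<nu> \<in> T. g \<in> bdV \<nu>})}"
    using stab_group_X_support[OF assms(1)] by auto
  have crossing: "g \<in> S \<longleftrightarrow> (a \<in> T) \<noteq> (b \<in> T)"
    if "iotaF C bdV g = {a, b}" "a \<noteq> b" for g a b
  proof -
    have incident: "{\<nu> \<in> T. g \<in> bdV \<nu>} = T \<inter> {a, b}"
      using that(1) T(1) unfolding iotaF_def by blast
    show ?thesis
      using that(2) unfolding T(2)
      by (cases "a \<in> T"; cases "b \<in> T") (simp_all add: incident Int_insert_right)
  qed
  obtain w ws' where w: "ws = w # ws'" "ws' \<noteq> []" "iotaF C bdV f = {w, hd ws'}" "w \<noteq> hd ws'"
    and rest: "dual_walk (iotaF C bdV) fs ws'"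
    using walk(1) by (auto simp: dual_walk_Cons)
  have "a \<in> T \<longleftrightarrow> b \<in> T" if "g \<in> set fs" "iotaF C bdV g = {a, b}" for g a b
  proof (cases "a = b")
    case False
    moreover have "g \<notin> S"
      using that(1) walk(3) by blast
    ultimately show ?thesis
      using crossing[OF that(2)] by simp
  qed simp
  then have "hd ws' \<in> T \<longleftrightarrow> last ws' \<in> T"
    by (rule dual_walk_invariant[OF rest])
  moreover have "last ws' = w"
    using w walk(2) by simp
  ultimately show ?thesis
    using crossing[OF w(3,4)] by simp
qed

lemma even_card_inter_iota_set:
  assumes "finite S" "finite A" "S \<subseteq> F"
    and "\<And>e. e \<in> A \<Longrightarrow> even (card (S \<inter> iotaE F bdF e))"
  shows "even (card (S \<inter> iota_set F bdF A))"
proof -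
  have incident: "S \<inter> iotaE F bdF e = S \<inter> {g. e \<in> bdF g}" for e
    using assms(3) unfolding iotaE_def by blast
  have "even (\<Sum>e\<in>A. card (S \<inter> iotaE F bdF e))"
    using assms(4) by (simp add: dvd_sum)
  also have "(\<Sum>e\<in>A. card (S \<inter> iotaE F bdF e)) = (\<Sum>e\<in>A. \<Sum>g\<in>S. of_bool (e \<in> bdF g))"
    using assms(1) by (simp add: incident sum_of_bool_eq)
  also have "\<dots> = (\<Sum>g\<in>S. card {e \<in> A. e \<in> bdF g})"
    using assms(2) by (subst sum.swap) (simp add: sum_of_bool_eq Int_def)
  finally have "even (\<Sum>g\<in>S. card {e \<in> A. e \<in> bdF g})" .
  moreover have "{g \<in> S. odd (card {e \<in> A. e \<in> bdF g})} = S \<inter> iota_set F bdF A"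
    using assms(3) unfolding iota_set_def by auto
  ultimately show ?thesis
    using assms(1) by (simp add: even_sum_iff)
qed

lemma logical_X_support_not_crossed_once:
  assumes lattice: "good_lattice V E F C ends bdF bdV"
    and logical: "logical_op E F C bdF bdV (S, {})"
    and walk: "dual_walk (iotaF C bdV) (f # fs) ws" "hd ws = last ws" "set (f # fs) \<subseteq> F"
      "set fs \<inter> S = {}"
  shows "f \<notin> S"
proof
  assume "f \<in> S"
  have "finite F" "finite E"
    using lattice unfolding good_lattice_def by auto
  have "face_cycle F C bdV (f # fs)"
    using closed_dual_walk_face_cycle walk(1-3) .
  then obtain A where "A \<subseteq> E"
      and A: "{g \<in> F. odd (length (filter (\<lambda>x. x = g) (f # fs)))} = iota_set F bdF A"
    using lattice unfolding good_lattice_def by blast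
  have "S \<inter> iota_set F bdF A = {f}"
  proof -
    have "f \<notin> set fs"
      using \<open>f \<in> S\<close> walk(4) by blast
    then have "filter (\<lambda>x. x = f) fs = []"
      by (auto simp: filter_empty_conv)
    moreover have "g = f" if "g \<in> S" "odd (length (filter (\<lambda>x. x = g) (f # fs)))" for g
      using that walk(4) by (auto simp: filter_empty_conv dest!: odd_pos)
    ultimately show ?thesis
      unfolding A[symmetric] using \<open>f \<in> S\<close> walk(3) by auto
  qed
  moreover have "even (card (S \<inter> iota_set F bdF A))"
  proof (rule even_card_inter_iota_set)
    show "S \<subseteq> F" using logical unfolding logical_op_def by simp
    then show "finite S" using \<open>finite F\<close> by (rule finite_subset)
    show "finite A" using \<open>A \<subseteq> E\<close> \<open>finite E\<close> by (rule finite_subset)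
    fix e assume "e \<in> A"
    then have "({}, iotaE F bdF e) \<in> stab_group E F C bdF bdV"
      using \<open>A \<subseteq> E\<close> by (blast intro: stab_group.B)
    then have "commutes (S, {}) ({}, iotaE F bdF e)"
      using logical unfolding logical_op_def by blast
    then show "even (card (S \<inter> iotaE F bdF e))"
      by (simp add: commutes_def)
  qed
  ultimately show False by simp
qed

theorem lemma5:
  fixes V :: "'a set" and E :: "'e set" and F :: "'f set" and C :: "'v set"
    and ends :: "'e \<Rightarrow> 'a set" and bdF :: "'f \<Rightarrow> 'e set" and bdV :: "'v \<Rightarrow> 'f set"
    and S :: "'f set"
  assumes "good_lattice V E F C ends bdF bdV"
    and "S \<subseteq> F"
    and "(S, {}) \<in> stab_group E F C bdF bdV \<or> logical_op E F C bdF bdV (S, {})"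
    and "\<not> cut_set F C bdV S"
  shows "S \<subseteq> {f \<in> F. card (iotaF C bdV f) = 1}"
proof
  fix f assume "f \<in> S"
  with assms(2) have "f \<in> F" by blast
  have "card (iotaF C bdV f) \<noteq> 2"
  proof
    assume "card (iotaF C bdV f) = 2"
    then obtain fs ws where walk: "dual_walk (iotaF C bdV) (f # fs) ws" "hd ws = last ws"
        "set fs \<inter> S = {}" and "set fs \<subseteq> F"
      by (rule two_volume_face_closed_dual_walk[OF assms(1,4) \<open>f \<in> F\<close>])
    from assms(3) have "f \<notin> S"
    proof
      assume "(S, {}) \<in> stab_group E F C bdF bdV"
      then show ?thesis using walk by (rule X_stabilizer_support_not_crossed_once)
    next
      assume "logical_op E F C bdF bdV (S, {})"
      then show ?thesis
        using walk \<open>set fs \<subseteq> F\<close> \<open>f \<in> F\<close> by (intro logical_X_support_not_crossed_once[OF assms(1)]) auto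
    qed
    with \<open>f \<in> S\<close> show False by blast
  qed
  moreover have "finite C" "card (iotaF C bdV f) \<le> 2"
    using assms(1) \<open>f \<in> F\<close> unfolding good_lattice_def by blast+
  moreover have "card (iotaF C bdV f) \<noteq> 0"
    using iotaF_nonempty[OF assms(1) \<open>f \<in> F\<close>] \<open>finite C\<close> unfolding iotaF_def by simp
  ultimately show "f \<in> {f \<in> F. card (iotaF C bdV f) = 1}"
    using \<open>f \<in> F\<close> by simp
qed

end
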